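(* Let $\mathcal{P}$ be a partition of $\{1,\dots,n\}$. A subspace $\mathcal{U}$ of $\mathbb{R}^n$ is $\mathcal{P}$-realizable if and only if every subspace $\mathcal{U}'$ with $\mathcal{U}'\sim\mathcal{U}$ is realizable.
   Context: $G_{\mathcal{P}}$ is the group of $n\times n$ orthogonal $\mathcal{P}$-block-diagonal matrices; $\mathcal{U}\sim\mathcal{U}'$ means $\mathcal{U}'=Q\mathcal{U}$ for some $Q\in G_{\mathcal{P}}$. $\mathcal{E}_{\mathcal{P}}=\{Y\succeq0: Y_{\mathcal{I}}=I\text{ for all }\mathcal{I}\in\mathcal{P}\}$ ($Y_{\mathcal{I}}$ the principal submatrix indexed by $\mathcal{I}$); $\mathcal{U}$ is $\mathcal{P}$-realizable if some $Y\in\mathcal{E}_{\mathcal{P}}$ has nullspace containing $\mathcal{U}$. $\mathcal{U}$ is realizable if some positive semidefinite matrix with unit diagonal has nullspace containing $\mathcal{U}$. *)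

theory Defs
  imports "HOL-Analysis.Analysis"
begin

text \<open>Vectors in R^n are real^'n, n = CARD('n); matrices are real^'n^'n.
  The index set {1..n} is the finite type 'n.\<close>

definition is_partition :: "'n set set \<Rightarrow> bool" where
  "is_partition P \<longleftrightarrow> (\<forall>I\<in>P. I \<noteq> {}) \<and> \<Union>P = UNIV \<and>
     (\<forall>I\<in>P. \<forall>J\<in>P. I \<noteq> J \<longrightarrow> I \<inter> J = {})"

definition psd :: "real^'n^'n \<Rightarrow> bool" where
  "psd Y \<longleftrightarrow> transpose Y = Y \<and> (\<forall>x. 0 \<le> x \<bullet> (Y *v x))"

definition nullspace :: "real^'n^'n \<Rightarrow> (real^'n) set" where
  "nullspace Y = {x. Y *v x = 0}"

definition block_diagonal :: "'n set set \<Rightarrow> real^'n^'n \<Rightarrow> bool" where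
  "block_diagonal P Q \<longleftrightarrow> (\<forall>i j. Q $ i $ j \<noteq> 0 \<longrightarrow> (\<exists>I\<in>P. i \<in> I \<and> j \<in> I))"

definition G_P :: "'n set set \<Rightarrow> (real^'n^'n) set" where
  "G_P P = {Q. orthogonal_matrix Q \<and> block_diagonal P Q}"

definition equiv_P :: "'n set set \<Rightarrow> (real^'n) set \<Rightarrow> (real^'n) set \<Rightarrow> bool" where
  "equiv_P P U U' \<longleftrightarrow> (\<exists>Q\<in>G_P P. U' = (\<lambda>x. Q *v x) ` U)"

definition E_P :: "'n set set \<Rightarrow> (real^'n^'n) set" where
  "E_P P = {Y. psd Y \<and> (\<forall>I\<in>P. \<forall>i\<in>I. \<forall>j\<in>I. Y $ i $ j = (if i = j then 1 else 0))}"

definition P_realizable :: "'n set set \<Rightarrow> (real^'n) set \<Rightarrow> bool" where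
  "P_realizable P U \<longleftrightarrow> (\<exists>Y\<in>E_P P. U \<subseteq> nullspace Y)"

definition realizable :: "(real^'n) set \<Rightarrow> bool" where
  "realizable U \<longleftrightarrow> (\<exists>Y. psd Y \<and> (\<forall>i. Y $ i $ i = 1) \<and> U \<subseteq> nullspace Y)"

end

theory Submission
  imports Defs
begin

text \<open>
  The forward direction is a computation: if \<open>Y \<in> E_P P\<close> annihilates \<open>U\<close> and \<open>Q \<in> G_P P\<close>,
  then \<open>Q Y Q\<^sup>T\<close> annihilates \<open>Q U\<close> and has unit diagonal, because every row of \<open>Q\<close> is a unit
  vector supported in a single block, where the quadratic form of \<open>Y\<close> is the identity.

  The converse is by duality. If \<open>U\<close> is not \<open>P\<close>-realizable, separating the identity from the
  compact convex set of block parts of the trace-normalized psd matrices annihilating \<open>U\<close> gives a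
  symmetric block-diagonal \<open>W\<close> with negative trace and \<open>W \<bullet> Y \<ge> 0\<close> for every psd \<open>Y\<close>
  annihilating \<open>U\<close>. The spectral theorem applied block by block yields \<open>Q \<in> G_P P\<close> with
  \<open>Q\<^sup>T W Q\<close> diagonal. A unit-diagonal psd \<open>Y\<close> annihilating \<open>Q\<^sup>T U\<close> would then give
  \<open>0 \<le> W \<bullet> (Q Y Q\<^sup>T) = (Q\<^sup>T W Q) \<bullet> Y = trace W < 0\<close>.
\<close>

section \<open>Matrix identities\<close>

lemma inner_matrix_vector_transpose:
  "(x::real^'n::finite) \<bullet> (A *v y) = (transpose A *v x) \<bullet> y"
  by (metis dot_lmul_matrix transpose_matrix_vector inner_commute)

lemma symmetric_matrix_inner_commute:
  fixes A :: "real^'n::finite^'n"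
  assumes "transpose A = A"
  shows "x \<bullet> (A *v y) = y \<bullet> (A *v x)"
  using inner_matrix_vector_transpose[of x A y] assms by (simp add: inner_commute)

lemma axis_inner_matrix_axis: "axis i 1 \<bullet> ((A::real^'n::finite^'n) *v axis j 1) = A $ i $ j"
  by (simp add: matrix_vector_mult_basis column_def inner_axis')

lemma congruence_entry:
  fixes A Q :: "real^'n::finite^'n"
  shows "(transpose Q ** A ** Q) $ i $ j = column i Q \<bullet> (A *v column j Q)"
proof -
  have "(transpose Q ** A ** Q) $ i $ j = axis i 1 \<bullet> (transpose Q *v (A *v (Q *v axis j 1)))"
    by (simp add: axis_inner_matrix_axis[symmetric] matrix_vector_mul_assoc matrix_mul_assoc)
  also have "\<dots> = (Q *v axis i 1) \<bullet> (A *v (Q *v axis j 1))"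
    by (subst inner_matrix_vector_transpose) simp
  finally show ?thesis by (simp add: matrix_vector_mult_basis)
qed

lemma congruence_diagonal_entry:
  fixes Q Y :: "real^'n::finite^'n"
  shows "(Q ** Y ** transpose Q) $ i $ i = row i Q \<bullet> (Y *v row i Q)"
  using congruence_entry[of "transpose Q" Y i i] by (simp add: column_transpose)

lemma inner_matrix_eq_trace: "(A::real^'n::finite^'n) \<bullet> B = trace (transpose A ** B)"
  by (simp add: inner_vec_def trace_def matrix_matrix_mult_def transpose_def) (rule sum.swap)

lemma inner_transpose_transpose: "transpose (A::real^'n::finite^'n) \<bullet> transpose B = A \<bullet> B"
  by (simp add: inner_vec_def transpose_def) (rule sum.swap)

lemma inner_mat_1: "mat 1 \<bullet> (A::real^'n::finite^'n) = trace A"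
  by (simp add: inner_matrix_eq_trace)

lemma trace_scaleR: "trace (c *\<^sub>R (A::real^'n::finite^'n)) = c * trace A"
  by (simp add: trace_def sum_distrib_left)

lemma trace_orthogonal_congruence:
  fixes A Q :: "real^'n::finite^'n"
  assumes "orthogonal_matrix Q"
  shows "trace (transpose Q ** A ** Q) = trace A"
  by (metis assms matrix_mul_assoc matrix_mul_lid orthogonal_matrix_def trace_mul_sym)

lemma inner_congruence:
  fixes A B Q :: "real^'n::finite^'n"
  shows "A \<bullet> (Q ** B ** transpose Q) = (transpose Q ** A ** Q) \<bullet> B"
  unfolding inner_matrix_eq_trace
  by (metis matrix_mul_assoc matrix_transpose_mul transpose_transpose trace_mul_sym)

lemma inner_diagonal_unit_diagonal:
  fixes D Y :: "real^'n::finite^'n"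
  assumes "\<And>i j. i \<noteq> j \<Longrightarrow> D $ i $ j = 0" "\<And>i. Y $ i $ i = 1"
  shows "D \<bullet> Y = trace D"
proof -
  have "D $ i $ j * Y $ i $ j = (if i = j then D $ i $ i else 0)" for i j
    using assms by auto
  then show ?thesis by (simp add: inner_vec_def trace_def)
qed

lemma image_orthogonal_transpose:
  fixes Q :: "real^'n::finite^'n"
  assumes "orthogonal_matrix Q"
  shows "(\<lambda>x. Q *v x) ` (\<lambda>x. transpose Q *v x) ` U = U"
proof -
  have "Q *v (transpose Q *v x) = x" for x
    using assms by (simp add: matrix_vector_mul_assoc orthogonal_matrix_def del: transpose_matrix_vector)
  then show ?thesis by (simp add: image_image)
qed

lemma nullspace_orthogonal_congruence:
  fixes Q Y :: "real^'n::finite^'n"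
  assumes "orthogonal_matrix Q" "U \<subseteq> nullspace Y"
  shows "(\<lambda>x. Q *v x) ` U \<subseteq> nullspace (Q ** Y ** transpose Q)"
proof
  fix y assume "y \<in> (\<lambda>x. Q *v x) ` U"
  then obtain u where "u \<in> U" "y = Q *v u" by blast
  moreover have "transpose Q ** Q = mat 1" using assms(1) by (simp add: orthogonal_matrix_def)
  ultimately have "transpose Q *v y = u" by (simp add: matrix_vector_mul_assoc)
  then have "(Q ** Y ** transpose Q) *v y = Q *v (Y *v u)"
    by (simp only: matrix_vector_mul_assoc[symmetric])
  then show "y \<in> nullspace (Q ** Y ** transpose Q)"
    using assms(2) \<open>u \<in> U\<close> by (auto simp: nullspace_def)
qed

section \<open>Eigenvectors of symmetric matrices\<close>

lemma linear_coeff_zero_if_quadratic_nonpos: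
  fixes c e :: real
  assumes "\<And>t. 2 * t * c + t * t * e \<le> 0"
  shows "c = 0"
proof (rule ccontr)
  assume "c \<noteq> 0"
  define s where "s = \<bar>e\<bar> + 1"
  have "s > 0" unfolding s_def by simp
  have "(2 * (c / s) * c + (c / s) * (c / s) * e) * s\<^sup>2 = c * c * (2 * s + e)"
    using \<open>s > 0\<close> by (simp add: field_simps power2_eq_square)
  moreover have "(2 * (c / s) * c + (c / s) * (c / s) * e) * s\<^sup>2 \<le> 0"
    using assms[of "c / s"] by (simp add: mult_nonpos_nonneg)
  moreover have "2 * s + e > 0" unfolding s_def by (simp add: abs_if)
  moreover have "c * c > 0" using \<open>c \<noteq> 0\<close> by (auto simp: zero_less_mult_iff linorder_neq_iff)
  ultimately show False by (metis mult_pos_pos not_le)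
qed

lemma rayleigh_maximizer_stationary:
  fixes A :: "real^'n::finite^'n"
  assumes sym: "transpose A = A" and V: "subspace V"
    and x: "x \<in> V" "norm x = 1"
    and max: "\<And>z. z \<in> V \<Longrightarrow> norm z = 1 \<Longrightarrow> z \<bullet> (A *v z) \<le> x \<bullet> (A *v x)"
    and y: "y \<in> V" "y \<bullet> x = 0"
  shows "y \<bullet> (A *v x) = 0"
proof (rule linear_coeff_zero_if_quadratic_nonpos)
  fix t :: real
  define l where "l = x \<bullet> (A *v x)"
  define z where "z = x + t *\<^sub>R y"
  have "z \<in> V" unfolding z_def using x y V by (simp add: subspace_add subspace_scale)
  have zz: "z \<bullet> z = 1 + t * t * (y \<bullet> y)"
    unfolding z_def using x y by (simp add: norm_eq_1 inner_add_left inner_add_right inner_commute algebra_simps)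
  then have "z \<bullet> z > 0" by (simp add: add_pos_nonneg)
  then have "norm z > 0" by simp
  then have "(z /\<^sub>R norm z) \<bullet> (A *v (z /\<^sub>R norm z)) \<le> l"
    unfolding l_def using \<open>z \<in> V\<close> V by (intro max) (simp_all add: subspace_scale)
  moreover have "(z /\<^sub>R norm z) \<bullet> (A *v (z /\<^sub>R norm z)) = z \<bullet> (A *v z) / (z \<bullet> z)"
    by (simp add: matrix_vector_mult_scaleR power2_norm_eq_inner[symmetric] power2_eq_square divide_inverse)
  ultimately have "z \<bullet> (A *v z) \<le> l * (z \<bullet> z)"
    using \<open>z \<bullet> z > 0\<close> by (simp add: divide_le_eq)
  moreover have "z \<bullet> (A *v z) = l + 2 * t * (y \<bullet> (A *v x)) + t * t * (y \<bullet> (A *v y))"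
    unfolding z_def l_def using symmetric_matrix_inner_commute[OF sym, of x y]
    by (simp add: matrix_vector_right_distrib inner_add_left inner_add_right matrix_vector_mult_scaleR algebra_simps)
  ultimately show "2 * t * (y \<bullet> (A *v x)) + t * t * (y \<bullet> (A *v y) - l * (y \<bullet> y)) \<le> 0"
    using zz by (simp add: algebra_simps)
qed

lemma symmetric_matrix_eigenvector_in_invariant_subspace:
  fixes A :: "real^'n::finite^'n"
  assumes sym: "transpose A = A" and V: "subspace V" and inv: "\<And>x. x \<in> V \<Longrightarrow> A *v x \<in> V"
    and "V \<noteq> {0}"
  obtains x c where "x \<in> V" "norm x = 1" "A *v x = c *\<^sub>R x"
proof -
  define S where "S = sphere 0 1 \<inter> V"
  have compact: "compact S"
    unfolding S_def by (rule compact_Int_closed[OF compact_sphere closed_subspace[OF V]])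
  have nonempty: "S \<noteq> {}"
  proof -
    obtain v where "v \<in> V" "v \<noteq> 0" using \<open>V \<noteq> {0}\<close> V subspace_0 by blast
    then have "v /\<^sub>R norm v \<in> S" unfolding S_def using V by (simp add: subspace_scale)
    then show ?thesis by blast
  qed
  have cont: "continuous_on S (\<lambda>x. x \<bullet> (A *v x))"
    by (intro continuous_on_inner continuous_on_id matrix_vector_mult_linear_continuous_on)
  obtain x where "x \<in> S" and max: "\<And>z. z \<in> S \<Longrightarrow> z \<bullet> (A *v z) \<le> x \<bullet> (A *v x)"
    using continuous_attains_sup[OF compact nonempty cont] by blast
  then have x: "x \<in> V" "norm x = 1" unfolding S_def by auto
  define l where "l = x \<bullet> (A *v x)"
  define r where "r = A *v x - l *\<^sub>R x"
  have "r \<in> V" unfolding r_def using inv x V by (simp add: subspace_diff subspace_scale)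
  moreover have "r \<bullet> x = 0" unfolding r_def l_def using x
    by (simp add: norm_eq_1 inner_diff_left inner_diff_right inner_commute)
  ultimately have "r \<bullet> (A *v x) = 0"
    by (intro rayleigh_maximizer_stationary[OF sym V x]) (auto simp: S_def intro: max)
  moreover have "r \<bullet> r = r \<bullet> (A *v x) - l * (r \<bullet> x)"
    by (metis r_def inner_diff_right inner_scaleR_right)
  ultimately have "r \<bullet> r = 0" using \<open>r \<bullet> x = 0\<close> by simp
  then have "A *v x = l *\<^sub>R x" unfolding r_def by simp
  with x show thesis by (rule that)
qed

lemma symmetric_matrix_orthonormal_eigenbasis:
  fixes A :: "real^'n::finite^'n"
  assumes sym: "transpose A = A"
  shows "subspace V \<Longrightarrow> (\<And>x. x \<in> V \<Longrightarrow> A *v x \<in> V) \<Longrightarrow>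
    \<exists>B. B \<subseteq> V \<and> pairwise orthogonal B \<and> (\<forall>b\<in>B. norm b = 1 \<and> (\<exists>c. A *v b = c *\<^sub>R b))
      \<and> V \<subseteq> span B"
proof (induction "dim V" arbitrary: V rule: less_induct)
  case (less V)
  show ?case
  proof (cases "V = {0}")
    case True
    then show ?thesis by (intro exI[of _ "{}"]) auto
  next
    case False
    obtain x c where x: "x \<in> V" "norm x = 1" and ev: "A *v x = c *\<^sub>R x"
      using symmetric_matrix_eigenvector_in_invariant_subspace[OF sym less.prems False] by blast
    define V' where "V' = {y \<in> V. y \<bullet> x = 0}"
    have V': "subspace V'"
      unfolding V'_def using less.prems(1) by (auto simp: subspace_def inner_add_left)
    have "A *v y \<in> V'" if "y \<in> V'" for y
      using that less.prems(2) symmetric_matrix_inner_commute[OF sym, of x y] ev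
      unfolding V'_def by (simp add: inner_commute)
    moreover have "dim V' < dim V"
    proof (rule dim_psubset)
      have "x \<notin> V'" using x unfolding V'_def by (simp add: norm_eq_1)
      then have "V' \<subset> V" using x unfolding V'_def by blast
      then show "span V' \<subset> span V" using V' less.prems(1) by (metis span_eq_iff)
    qed
    ultimately obtain B' where B': "B' \<subseteq> V'" "pairwise orthogonal B'"
      "\<forall>b\<in>B'. norm b = 1 \<and> (\<exists>c. A *v b = c *\<^sub>R b)" "V' \<subseteq> span B'"
      using less.hyps V' by blast
    have "V \<subseteq> span (insert x B')"
    proof
      fix v assume "v \<in> V"
      then have "v - (v \<bullet> x) *\<^sub>R x \<in> V'"
        unfolding V'_def using x less.prems(1)
        by (simp add: subspace_diff subspace_scale inner_diff_left norm_eq_1)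
      then have "v - (v \<bullet> x) *\<^sub>R x \<in> span (insert x B')"
        using B'(4) span_mono[of B' "insert x B'"] by blast
      then show "v \<in> span (insert x B')"
        by (metis diff_add_cancel insertI1 span_add span_base span_scale)
    qed
    moreover have "pairwise orthogonal (insert x B')"
      using B'(1,2) unfolding V'_def pairwise_def orthogonal_def by (auto simp: inner_commute)
    moreover have "insert x B' \<subseteq> V" using B'(1) x unfolding V'_def by blast
    moreover have "\<forall>b\<in>insert x B'. norm b = 1 \<and> (\<exists>c. A *v b = c *\<^sub>R b)" using B'(3) x ev by blast
    ultimately show ?thesis by blast
  qed
qed

section \<open>Block-diagonal matrices\<close>

definition block_of :: "'n set set \<Rightarrow> 'n \<Rightarrow> 'n set" where
  "block_of P i = (THE I. I \<in> P \<and> i \<in> I)"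

lemma partition_block_unique:
  "is_partition P \<Longrightarrow> I \<in> P \<Longrightarrow> J \<in> P \<Longrightarrow> i \<in> I \<Longrightarrow> i \<in> J \<Longrightarrow> I = J"
  unfolding is_partition_def by blast

lemma block_of_eqI:
  assumes "is_partition P" "I \<in> P" "i \<in> I"
  shows "block_of P i = I"
  unfolding block_of_def
  using assms partition_block_unique[OF assms(1)] by (intro the_equality) auto

lemma block_of_mem:
  assumes "is_partition P"
  shows "block_of P i \<in> P" "i \<in> block_of P i"
proof -
  obtain I where "I \<in> P" "i \<in> I" using assms unfolding is_partition_def by blast
  then show "block_of P i \<in> P" "i \<in> block_of P i" using block_of_eqI[OF assms] by auto
qed

lemma block_diagonal_iff:
  assumes "is_partition P"
  shows "block_diagonal P Q \<longleftrightarrow> (\<forall>i j. Q $ i $ j \<noteq> 0 \<longrightarrow> block_of P i = block_of P j)"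
  unfolding block_diagonal_def
  by (metis assms block_of_eqI block_of_mem)

lemma block_diagonal_transpose:
  "block_diagonal P (transpose Q) \<longleftrightarrow> block_diagonal P Q"
  unfolding block_diagonal_def transpose_def by auto

lemma G_P_transpose: "Q \<in> G_P P \<Longrightarrow> transpose Q \<in> G_P P"
  by (simp add: G_P_def block_diagonal_transpose)

definition coordinate_subspace :: "'n set \<Rightarrow> (real^'n) set" where
  "coordinate_subspace I = {x. \<forall>k. k \<notin> I \<longrightarrow> x $ k = 0}"

lemma subspace_coordinate_subspace: "subspace (coordinate_subspace I)"
  by (auto simp: subspace_def coordinate_subspace_def)

lemma dim_coordinate_subspace: "dim (coordinate_subspace (I :: 'n::finite set)) = card I"
proof -
  let ?B = "(\<lambda>i. axis i (1::real)) ` I"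
  have "?B \<subseteq> coordinate_subspace I" by (auto simp: coordinate_subspace_def axis_def)
  moreover have "coordinate_subspace I \<subseteq> span ?B"
  proof
    fix x assume "x \<in> coordinate_subspace I"
    then have "x = (\<Sum>i\<in>I. x $ i *\<^sub>R axis i 1)"
      by (auto simp: coordinate_subspace_def vec_eq_iff axis_def sum_component if_distrib cong: if_cong)
    also have "\<dots> \<in> span ?B" by (intro span_sum span_scale span_base) auto
    finally show "x \<in> span ?B" .
  qed
  moreover have "independent ?B"
    by (rule independent_mono[OF independent_Basis]) (auto simp: Basis_vec_def)
  ultimately have "card ?B = dim (coordinate_subspace I)" by (rule basis_card_eq_dim)
  moreover have "card ?B = card I" by (rule card_image) (auto simp: inj_on_def axis_eq_axis)
  ultimately show ?thesis by simp
qed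

lemma orthogonal_coordinate_subspaces:
  assumes "I \<inter> J = {}" "x \<in> coordinate_subspace I" "y \<in> coordinate_subspace J"
  shows "x \<bullet> y = 0"
proof -
  have "x $ k * y $ k = 0" for k using assms by (auto simp: coordinate_subspace_def)
  then show ?thesis by (simp add: inner_vec_def sum.neutral)
qed

lemma block_diagonal_maps_coordinate_subspace:
  assumes P: "is_partition P" and A: "block_diagonal P A" and I: "I \<in> P"
    and x: "x \<in> coordinate_subspace I"
  shows "A *v x \<in> coordinate_subspace I"
  unfolding coordinate_subspace_def
proof (intro CollectI allI impI)
  fix k assume "k \<notin> I"
  have "A $ k $ j * x $ j = 0" for j
  proof (rule ccontr)
    assume "A $ k $ j * x $ j \<noteq> 0"
    then have "j \<in> I" and "block_of P k = block_of P j"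
      using x A by (auto simp: coordinate_subspace_def block_diagonal_iff[OF P])
    then show False using \<open>k \<notin> I\<close> block_of_mem[OF P] block_of_eqI[OF P I] by metis
  qed
  then show "(A *v x) $ k = 0" by (simp add: matrix_vector_mult_def sum.neutral)
qed

lemma row_mem_coordinate_subspace:
  assumes "is_partition P" "block_diagonal P Q"
  shows "row i Q \<in> coordinate_subspace (block_of P i)"
  using assms block_of_mem[OF assms(1)] block_of_eqI[OF assms(1)]
  by (auto simp: coordinate_subspace_def row_def block_diagonal_iff) metis

lemma block_orthonormal_eigenbasis:
  fixes A :: "real^'n::finite^'n"
  assumes P: "is_partition P" and sym: "transpose A = A" and A: "block_diagonal P A" and I: "I \<in> P"
  shows "\<exists>\<beta>. \<forall>i\<in>I. \<beta> i \<in> coordinate_subspace I \<and> norm (\<beta> i) = 1 \<and> (\<exists>c. A *v \<beta> i = c *\<^sub>R \<beta> i)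
      \<and> (\<forall>j\<in>I. i \<noteq> j \<longrightarrow> \<beta> i \<bullet> \<beta> j = 0)"
proof -
  obtain B where B: "B \<subseteq> coordinate_subspace I" "pairwise orthogonal B"
      "\<forall>b\<in>B. norm b = 1 \<and> (\<exists>c. A *v b = c *\<^sub>R b)" "coordinate_subspace I \<subseteq> span B"
    using symmetric_matrix_orthonormal_eigenbasis[OF sym subspace_coordinate_subspace]
      block_diagonal_maps_coordinate_subspace[OF P A I] by blast
  have "independent B"
    using B(2,3) pairwise_orthogonal_independent by force
  then have "finite B" and "card B = card I"
    using B(1,4) basis_card_eq_dim[of B "coordinate_subspace I"]
    by (auto simp: dim_coordinate_subspace finiteI_independent)
  then obtain \<beta> where \<beta>: "bij_betw \<beta> I B"
    using finite_same_card_bij[of I B] by auto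
  show ?thesis
  proof (intro exI[of _ \<beta>] ballI conjI impI)
    fix i assume "i \<in> I"
    then have "\<beta> i \<in> B" using \<beta> by (auto simp: bij_betw_def)
    then show "\<beta> i \<in> coordinate_subspace I" "norm (\<beta> i) = 1" "\<exists>c. A *v \<beta> i = c *\<^sub>R \<beta> i"
      using B(1,3) by auto
    fix j assume "j \<in> I" "i \<noteq> j"
    then have "\<beta> i \<noteq> \<beta> j" "\<beta> j \<in> B"
      using \<beta> \<open>i \<in> I\<close> by (auto simp: bij_betw_def inj_on_def)
    then show "\<beta> i \<bullet> \<beta> j = 0"
      using \<open>\<beta> i \<in> B\<close> B(2) by (auto simp: pairwise_def orthogonal_def)
  qed
qed

lemma block_diagonal_orthonormal_eigencolumns:
  fixes A :: "real^'n::finite^'n"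
  assumes P: "is_partition P" and sym: "transpose A = A" and A: "block_diagonal P A"
  obtains col where "\<And>i. col i \<in> coordinate_subspace (block_of P i)" "\<And>i. norm (col i) = 1"
    "\<And>i. \<exists>c. A *v col i = c *\<^sub>R col i" "\<And>i j. i \<noteq> j \<Longrightarrow> col i \<bullet> col j = 0"
proof -
  from bchoice[OF ballI[OF block_orthonormal_eigenbasis[OF P sym A]]]
  obtain \<beta> where \<beta>: "\<forall>I\<in>P. \<forall>i\<in>I. \<beta> I i \<in> coordinate_subspace I \<and> norm (\<beta> I i) = 1
      \<and> (\<exists>c. A *v \<beta> I i = c *\<^sub>R \<beta> I i) \<and> (\<forall>j\<in>I. i \<noteq> j \<longrightarrow> \<beta> I i \<bullet> \<beta> I j = 0)" ..
  define col where "col i = \<beta> (block_of P i) i" for i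
  have col: "col i \<in> coordinate_subspace (block_of P i)" "norm (col i) = 1"
      "\<exists>c. A *v col i = c *\<^sub>R col i" for i
    using \<beta>[rule_format, OF block_of_mem[OF P, of i]] unfolding col_def by simp_all
  moreover have "col i \<bullet> col j = 0" if "i \<noteq> j" for i j
  proof (cases "block_of P i = block_of P j")
    case True
    then show ?thesis using \<beta> block_of_mem[OF P] that unfolding col_def by metis
  next
    case False
    then have "block_of P i \<inter> block_of P j = {}"
      using P block_of_mem[OF P] unfolding is_partition_def by metis
    then show ?thesis using orthogonal_coordinate_subspaces col(1) by blast
  qed
  ultimately show thesis by (rule that)
qed

lemma block_diagonal_symmetric_diagonalizable:
  fixes A :: "real^'n::finite^'n"
  assumes P: "is_partition P" and sym: "transpose A = A" and A: "block_diagonal P A"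
  obtains Q where "Q \<in> G_P P" "\<And>i j. i \<noteq> j \<Longrightarrow> (transpose Q ** A ** Q) $ i $ j = 0"
proof -
  obtain col where col: "\<And>i. col i \<in> coordinate_subspace (block_of P i)" "\<And>i. norm (col i) = 1"
    "\<And>i. \<exists>c. A *v col i = c *\<^sub>R col i" and orth: "\<And>i j. i \<noteq> j \<Longrightarrow> col i \<bullet> col j = 0"
    using block_diagonal_orthonormal_eigencolumns[OF P sym A] by blast
  define Q where "Q = (\<chi> k i. col i $ k)"
  have column_Q: "column i Q = col i" for i
    unfolding Q_def column_def by (simp add: vec_eq_iff)
  have "orthogonal_matrix Q"
    unfolding orthogonal_matrix_orthonormal_columns column_Q orthogonal_def using col(2) orth by blast
  moreover have "block_diagonal P Q"
    unfolding block_diagonal_iff[OF P]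
  proof (intro allI impI)
    fix k i assume "Q $ k $ i \<noteq> 0"
    then have "k \<in> block_of P i" using col(1)[of i] by (auto simp: Q_def coordinate_subspace_def)
    then show "block_of P k = block_of P i" using block_of_eqI[OF P] block_of_mem[OF P] by metis
  qed
  moreover have "(transpose Q ** A ** Q) $ i $ j = 0" if "i \<noteq> j" for i j
  proof -
    obtain c where "A *v col j = c *\<^sub>R col j" using col(3) by blast
    then show ?thesis unfolding congruence_entry column_Q using orth[OF that] by simp
  qed
  ultimately show thesis using that by (simp add: G_P_def)
qed

section \<open>Positive semidefinite matrices\<close>

lemma psd_symmetric: "psd Y \<Longrightarrow> Y $ j $ i = Y $ i $ j"
  unfolding psd_def by (metis transpose_def vec_lambda_beta)

lemma psd_diag_nonneg: "psd Y \<Longrightarrow> 0 \<le> Y $ i $ i"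
  using axis_inner_matrix_axis[of i Y i] unfolding psd_def by metis

lemma psd_offdiag_bound:
  fixes Y :: "real^'n::finite^'n"
  assumes "psd Y"
  shows "2 * \<bar>Y $ i $ j\<bar> \<le> Y $ i $ i + Y $ j $ j"
proof -
  have "0 \<le> Y $ i $ i + 2 * s * Y $ i $ j + Y $ j $ j" if "s * s = 1" for s :: real
  proof -
    let ?x = "axis i 1 + s *\<^sub>R axis j (1::real)"
    have "0 \<le> ?x \<bullet> (Y *v ?x)" using assms unfolding psd_def by blast
    also have "?x \<bullet> (Y *v ?x) = Y $ i $ i + s * Y $ i $ j + s * Y $ j $ i + s * s * Y $ j $ j"
      by (simp add: matrix_vector_right_distrib inner_add_left inner_add_right axis_inner_matrix_axis
          matrix_vector_mult_scaleR algebra_simps)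
    finally show ?thesis using psd_symmetric[OF assms, of i j] that by simp
  qed
  from this[of 1] this[of "-1"] show ?thesis by simp
qed

lemma psd_entry_le_trace:
  fixes Y :: "real^'n::finite^'n"
  assumes "psd Y"
  shows "\<bar>Y $ i $ j\<bar> \<le> trace Y"
proof -
  have diag: "Y $ k $ k \<le> trace Y" for k
    unfolding trace_def by (rule member_le_sum) (auto intro: psd_diag_nonneg[OF assms])
  show ?thesis
  proof (cases "i = j")
    case True
    then show ?thesis using psd_diag_nonneg[OF assms, of i] diag[of i] by simp
  next
    case False
    have "Y $ i $ i + Y $ j $ j \<le> trace Y"
      unfolding trace_def using False psd_diag_nonneg[OF assms]
      by (simp add: sum.remove[of UNIV i] sum.remove[of "UNIV - {i}" j] sum_nonneg)
    then show ?thesis using psd_offdiag_bound[OF assms, of i j] psd_diag_nonneg[OF assms] by linarith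
  qed
qed

lemma psd_trace_nonneg: "psd Y \<Longrightarrow> 0 \<le> trace Y"
  unfolding trace_def by (rule sum_nonneg) (rule psd_diag_nonneg)

lemma psd_trace_eq_0_imp_eq_0:
  fixes Y :: "real^'n::finite^'n"
  shows "psd Y \<Longrightarrow> trace Y = 0 \<Longrightarrow> Y = 0"
  using psd_entry_le_trace[of Y] by (fastforce simp: vec_eq_iff)

lemma psd_scaleR: "psd Y \<Longrightarrow> 0 \<le> c \<Longrightarrow> psd (c *\<^sub>R Y)"
  unfolding psd_def by (simp add: transpose_scalar scaleR_matrix_vector_assoc[symmetric])

lemma psd_congruence:
  fixes Q Y :: "real^'n::finite^'n"
  assumes "psd Y"
  shows "psd (Q ** Y ** transpose Q)"
  unfolding psd_def
proof
  show "transpose (Q ** Y ** transpose Q) = Q ** Y ** transpose Q"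
    using assms unfolding psd_def by (simp add: matrix_transpose_mul matrix_mul_assoc)
  show "\<forall>x. 0 \<le> x \<bullet> ((Q ** Y ** transpose Q) *v x)"
  proof
    fix x
    have "x \<bullet> ((Q ** Y ** transpose Q) *v x) = (transpose Q *v x) \<bullet> (Y *v (transpose Q *v x))"
      by (simp add: matrix_vector_mul_assoc[symmetric] inner_matrix_vector_transpose)
    then show "0 \<le> x \<bullet> ((Q ** Y ** transpose Q) *v x)" using assms unfolding psd_def by simp
  qed
qed

lemma convex_psd: "convex {Y :: real^'n::finite^'n. psd Y}"
  unfolding convex_def psd_def
  by (auto simp: transpose_def vec_eq_iff matrix_vector_mult_add_rdistrib inner_add_right
      scaleR_matrix_vector_assoc[symmetric] intro!: add_nonneg_nonneg mult_nonneg_nonneg)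

lemma closed_psd: "closed {Y :: real^'n::finite^'n. psd Y}"
proof -
  have "{Y :: real^'n^'n. psd Y} = {Y. transpose Y = Y} \<inter> (\<Inter>x. {Y. 0 \<le> x \<bullet> (Y *v x)})"
    by (auto simp: psd_def)
  moreover have "continuous_on UNIV (\<lambda>Y :: real^'n^'n. transpose Y)"
    unfolding transpose_def by (intro continuous_intros)
  moreover have "continuous_on UNIV (\<lambda>Y :: real^'n^'n. x \<bullet> (Y *v x))" for x
    unfolding matrix_vector_mult_def by (intro continuous_intros)
  ultimately show ?thesis
    by (simp add: closed_Int closed_INT closed_Collect_eq closed_Collect_le continuous_on_id continuous_on_const)
qed

lemma subspace_nullspace_contains: "subspace {Y :: real^'n::finite^'n. U \<subseteq> nullspace Y}"
  by (auto simp: subspace_def nullspace_def subset_eq matrix_vector_mult_add_rdistrib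
      scaleR_matrix_vector_assoc[symmetric])

definition psd_slice :: "(real^'n) set \<Rightarrow> real \<Rightarrow> (real^'n^'n) set" where
  "psd_slice U t = {Y. psd Y \<and> U \<subseteq> nullspace Y \<and> trace Y = t}"

lemma psd_slice_eq:
  "psd_slice U t = {Y :: real^'n::finite^'n. psd Y} \<inter> {Y. U \<subseteq> nullspace Y} \<inter> {Y. mat 1 \<bullet> Y = t}"
  by (auto simp: psd_slice_def inner_mat_1)

lemma convex_psd_slice: "convex (psd_slice (U :: (real^'n::finite) set) t)"
  unfolding psd_slice_eq
  by (intro convex_Int convex_psd subspace_imp_convex subspace_nullspace_contains convex_hyperplane)

lemma compact_psd_slice: "compact (psd_slice (U :: (real^'n::finite) set) t)"
proof -
  have "closed (psd_slice U t)"
    unfolding psd_slice_eq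
    by (intro closed_Int closed_psd closed_subspace subspace_nullspace_contains closed_hyperplane)
  moreover have "norm Y \<le> real CARD('n) * (real CARD('n) * t)" if "Y \<in> psd_slice U t" for Y
  proof -
    have "psd Y" "trace Y = t" using that by (auto simp: psd_slice_def)
    have row: "norm (Y $ i) \<le> real CARD('n) * t" for i
    proof -
      have "norm (Y $ i) \<le> (\<Sum>j\<in>UNIV. \<bar>Y $ i $ j\<bar>)" by (rule norm_le_l1_cart)
      also have "\<dots> \<le> (\<Sum>j\<in>(UNIV::'n set). t)"
        by (rule sum_mono) (use psd_entry_le_trace[OF \<open>psd Y\<close>] \<open>trace Y = t\<close> in auto)
      finally show ?thesis by simp
    qed
    have "norm Y \<le> (\<Sum>i\<in>UNIV. norm (Y $ i))"
      unfolding norm_vec_def by (rule L2_set_le_sum) simp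
    also have "\<dots> \<le> (\<Sum>i\<in>(UNIV::'n set). real CARD('n) * t)" by (rule sum_mono) (rule row)
    finally show ?thesis by simp
  qed
  then have "bounded (psd_slice U t)" unfolding bounded_iff by blast
  ultimately show ?thesis by (simp add: compact_eq_bounded_closed)
qed

lemma scaleR_mem_psd_slice:
  fixes Y :: "real^'n::finite^'n"
  assumes "psd Y" "U \<subseteq> nullspace Y" "trace Y > 0" "t \<ge> 0"
  shows "(t / trace Y) *\<^sub>R Y \<in> psd_slice U t"
  using assms psd_scaleR[OF assms(1), of "t / trace Y"]
  by (auto simp: psd_slice_def nullspace_def trace_scaleR subset_eq scaleR_matrix_vector_assoc[symmetric])

section \<open>Realizability\<close>

lemma E_P_quadratic_form_on_block:
  assumes "Y \<in> E_P P" "I \<in> P" "x \<in> coordinate_subspace I"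
  shows "x \<bullet> (Y *v x) = x \<bullet> x"
proof -
  have "x $ k * (Y $ k $ l * x $ l) = (if l = k then x $ k * x $ l else 0)" for k l
  proof (cases "k \<in> I \<and> l \<in> I")
    case True
    then show ?thesis using assms(1,2) by (auto simp: E_P_def)
  next
    case False
    then show ?thesis using assms(3) by (auto simp: coordinate_subspace_def)
  qed
  then show ?thesis
    by (simp add: inner_vec_def matrix_vector_mult_def sum_distrib_left)
qed

lemma P_realizable_imp_realizable_equiv:
  assumes P: "is_partition P" and "P_realizable P U" and "equiv_P P U U'"
  shows "realizable U'"
proof -
  obtain Y where Y: "Y \<in> E_P P" "U \<subseteq> nullspace Y"
    using assms(2) by (auto simp: P_realizable_def)
  obtain Q where Q: "orthogonal_matrix Q" "block_diagonal P Q" and U': "U' = (\<lambda>x. Q *v x) ` U"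
    using assms(3) by (auto simp: equiv_P_def G_P_def)
  have "(Q ** Y ** transpose Q) $ i $ i = 1" for i
  proof -
    have "row i Q \<bullet> (Y *v row i Q) = row i Q \<bullet> row i Q"
      using E_P_quadratic_form_on_block[OF Y(1) block_of_mem(1)[OF P] row_mem_coordinate_subspace[OF P Q(2)]] .
    also have "\<dots> = 1" using Q(1) by (simp add: orthogonal_matrix_orthonormal_rows norm_eq_1)
    finally show ?thesis by (simp add: congruence_diagonal_entry)
  qed
  moreover have "psd (Q ** Y ** transpose Q)" using Y(1) by (simp add: E_P_def psd_congruence)
  ultimately show ?thesis
    using nullspace_orthogonal_congruence[OF Q(1) Y(2)] unfolding U' realizable_def by blast
qed

definition block_part :: "'n set set \<Rightarrow> real^'n^'n \<Rightarrow> real^'n^'n" where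
  "block_part P A = (\<chi> i j. if block_of P i = block_of P j then A $ i $ j else 0)"

lemma linear_block_part: "linear (block_part P)"
  by (rule linearI) (simp_all add: block_part_def vec_eq_iff)

lemma trace_block_part: "trace (block_part P A) = trace A"
  by (simp add: trace_def block_part_def)

lemma block_part_mat_1: "block_part P (mat 1) = mat 1"
  by (simp add: block_part_def mat_def vec_eq_iff)

lemma transpose_block_part: "transpose (block_part P A) = block_part P (transpose A)"
  by (simp add: block_part_def transpose_def vec_eq_iff eq_commute)

lemma inner_block_part: "block_part P (A::real^'n::finite^'n) \<bullet> B = A \<bullet> block_part P B"
  unfolding inner_vec_def block_part_def by (intro sum.cong refl) simp

lemma block_diagonal_block_part: "is_partition P \<Longrightarrow> block_diagonal P (block_part P A)"
  by (simp add: block_diagonal_iff block_part_def)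

lemma block_part_eq_mat_1_imp_E_P:
  assumes "is_partition P" "psd Y" "block_part P Y = mat 1"
  shows "Y \<in> E_P P"
  unfolding E_P_def
proof (intro CollectI conjI ballI)
  fix I i j assume "I \<in> P" "i \<in> I" "j \<in> I"
  then have "block_part P Y $ i $ j = Y $ i $ j"
    using block_of_eqI[OF assms(1)] by (simp add: block_part_def)
  then show "Y $ i $ j = (if i = j then 1 else 0)" using assms(3) by (simp add: mat_def)
qed (fact assms(2))

text \<open>Separate \<open>mat 1\<close> from the block parts of the psd matrices of trace \<open>n\<close> annihilating \<open>U\<close>;
  shifting the normal \<open>a\<close> by \<open>(b / n) *\<^sub>R mat 1\<close> makes the functional nonnegative on the whole cone.\<close>
lemma not_P_realizable_imp_separating_form:
  fixes U :: "(real^'n::finite) set"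
  assumes P: "is_partition P" and not_realizable: "\<not> P_realizable P U"
  obtains W0 where "W0 \<bullet> mat 1 < 0" "\<And>Y. psd Y \<Longrightarrow> U \<subseteq> nullspace Y \<Longrightarrow> 0 \<le> W0 \<bullet> block_part P Y"
proof -
  define n where "n = real CARD('n)"
  define C where "C = block_part P ` psd_slice U n"
  have "continuous_on (psd_slice U n) (block_part P)"
    by (intro linear_continuous_on) (simp add: linear_block_part flip: linear_conv_bounded_linear)
  then have "compact C"
    unfolding C_def using compact_psd_slice by (rule compact_continuous_image)
  then have closed_C: "closed C" by (rule compact_imp_closed)
  have convex_C: "convex C"
    unfolding C_def by (rule convex_linear_image[OF linear_block_part convex_psd_slice])
  have notin: "mat 1 \<notin> C"
  proof
    assume "mat 1 \<in> C"
    then obtain Y where Y: "Y \<in> psd_slice U n" and "block_part P Y = mat 1"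
      unfolding C_def by (rule imageE) simp
    then have "Y \<in> E_P P"
      using block_part_eq_mat_1_imp_E_P[OF P] by (simp add: psd_slice_def)
    then show False using Y not_realizable by (auto simp: P_realizable_def psd_slice_def)
  qed
  obtain a b where ab: "a \<bullet> mat 1 < b" "\<forall>Z\<in>C. b < a \<bullet> Z"
    using separating_hyperplane_closed_point[OF convex_C closed_C notin] by blast
  define W0 where "W0 = a - (b / n) *\<^sub>R mat 1"
  have "n > 0" unfolding n_def by simp
  have "W0 \<bullet> mat 1 < 0"
    using ab(1) \<open>n > 0\<close> by (simp add: W0_def inner_diff_left inner_mat_1 trace_I n_def)
  moreover have "0 \<le> W0 \<bullet> block_part P Y" if Y: "psd Y" "U \<subseteq> nullspace Y" for Y
  proof (cases "trace Y = 0")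
    case True
    then show ?thesis using psd_trace_eq_0_imp_eq_0[OF Y(1)] by (simp add: linear_0[OF linear_block_part])
  next
    case False
    then have "trace Y > 0" using psd_trace_nonneg[OF Y(1)] by simp
    define c where "c = n / trace Y"
    have "c > 0" unfolding c_def using \<open>trace Y > 0\<close> \<open>n > 0\<close> by simp
    have "block_part P (c *\<^sub>R Y) \<in> C"
      unfolding C_def c_def using scaleR_mem_psd_slice[OF Y \<open>trace Y > 0\<close>] \<open>n > 0\<close> by simp
    then have "b < a \<bullet> block_part P (c *\<^sub>R Y)" using ab(2) by blast
    also have "\<dots> = c * (a \<bullet> block_part P Y)" by (simp add: linear_scale[OF linear_block_part])
    finally have "b / c < a \<bullet> block_part P Y" using \<open>c > 0\<close> by (simp add: divide_less_eq mult.commute)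
    moreover have "b / c = b / n * trace Y" unfolding c_def using \<open>trace Y > 0\<close> by simp
    ultimately show ?thesis by (simp add: W0_def inner_diff_left inner_mat_1 trace_block_part)
  qed
  ultimately show thesis by (rule that)
qed

lemma not_P_realizable_imp_separating_matrix:
  fixes U :: "(real^'n::finite) set"
  assumes P: "is_partition P" and "\<not> P_realizable P U"
  obtains W where "transpose W = W" "block_diagonal P W" "trace W < 0"
    "\<And>Y. psd Y \<Longrightarrow> U \<subseteq> nullspace Y \<Longrightarrow> 0 \<le> W \<bullet> Y"
proof -
  obtain W0 where W0: "W0 \<bullet> mat 1 < 0"
    and W0_nonneg: "\<And>Y. psd Y \<Longrightarrow> U \<subseteq> nullspace Y \<Longrightarrow> 0 \<le> W0 \<bullet> block_part P Y"
    using not_P_realizable_imp_separating_form[OF assms] by blast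
  define W where "W = block_part P ((1/2) *\<^sub>R (W0 + transpose W0))"
  have inner_W: "W \<bullet> Y = W0 \<bullet> block_part P Y" if "transpose Y = Y" for Y
  proof -
    have "transpose W0 \<bullet> block_part P Y = W0 \<bullet> block_part P Y"
      by (metis inner_transpose_transpose transpose_block_part transpose_transpose that)
    moreover have "W \<bullet> Y = (W0 \<bullet> block_part P Y + transpose W0 \<bullet> block_part P Y) / 2"
      unfolding W_def inner_block_part by (simp add: inner_add_left)
    ultimately show ?thesis by simp
  qed
  have "transpose ((1/2) *\<^sub>R (W0 + transpose W0)) = (1/2) *\<^sub>R (W0 + transpose W0)"
    by (simp add: transpose_def vec_eq_iff add.commute)
  then have "transpose W = W" unfolding W_def transpose_block_part by simp
  moreover have "trace W < 0"
    using inner_W[of "mat 1"] W0 inner_mat_1[of W] by (simp add: inner_commute block_part_mat_1)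
  moreover have "0 \<le> W \<bullet> Y" if "psd Y" "U \<subseteq> nullspace Y" for Y
    using inner_W W0_nonneg that by (simp add: psd_def)
  ultimately show thesis using that block_diagonal_block_part[OF P] unfolding W_def by blast
qed

lemma realizable_equiv_imp_P_realizable:
  fixes U :: "(real^'n::finite) set"
  assumes P: "is_partition P" and realizable: "\<And>U'. equiv_P P U U' \<Longrightarrow> realizable U'"
  shows "P_realizable P U"
proof (rule ccontr)
  assume "\<not> P_realizable P U"
  then obtain W where sym: "transpose W = W" and "block_diagonal P W" and "trace W < 0"
    and W_nonneg: "\<And>Y. psd Y \<Longrightarrow> U \<subseteq> nullspace Y \<Longrightarrow> 0 \<le> W \<bullet> Y"
    using not_P_realizable_imp_separating_matrix[OF P] by blast
  obtain Q where "Q \<in> G_P P" and diagonal: "\<And>i j. i \<noteq> j \<Longrightarrow> (transpose Q ** W ** Q) $ i $ j = 0"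
    using block_diagonal_symmetric_diagonalizable[OF P sym \<open>block_diagonal P W\<close>] by blast
  then have "orthogonal_matrix Q" by (simp add: G_P_def)
  have "equiv_P P U ((\<lambda>x. transpose Q *v x) ` U)"
    using G_P_transpose[OF \<open>Q \<in> G_P P\<close>] unfolding equiv_P_def by blast
  then obtain Y where Y: "psd Y" "\<And>i. Y $ i $ i = 1" "(\<lambda>x. transpose Q *v x) ` U \<subseteq> nullspace Y"
    using realizable unfolding realizable_def by blast
  have "U \<subseteq> nullspace (Q ** Y ** transpose Q)"
    using nullspace_orthogonal_congruence[OF \<open>orthogonal_matrix Q\<close> Y(3)]
    by (simp only: image_orthogonal_transpose[OF \<open>orthogonal_matrix Q\<close>])
  then have "0 \<le> W \<bullet> (Q ** Y ** transpose Q)" using W_nonneg psd_congruence[OF Y(1)] by blast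
  also have "\<dots> = trace (transpose Q ** W ** Q)"
    unfolding inner_congruence using diagonal Y(2) by (rule inner_diagonal_unit_diagonal)
  also have "\<dots> = trace W" using \<open>orthogonal_matrix Q\<close> by (rule trace_orthogonal_congruence)
  finally show False using \<open>trace W < 0\<close> by simp
qed

theorem theorem5p7:
  fixes P :: "'n::finite set set" and U :: "(real^'n) set"
  assumes "is_partition P" and "subspace U"
  shows "P_realizable P U \<longleftrightarrow> (\<forall>U'. equiv_P P U U' \<longrightarrow> realizable U')"
  \<comment> \<open>The equivalence holds for arbitrary sets \<open>U\<close>.\<close>
  using P_realizable_imp_realizable_equiv[OF assms(1)] realizable_equiv_imp_P_realizable[OF assms(1)]
  by blast

end
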